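(* Let $\kappa<\kappa'$ be regular cardinals. Then the inclusion functor $\mathbf{CAMA}_{\kappa'}\hookrightarrow\mathbf{CAMA}_\kappa$ and the inclusion functor $\mathbf{MKF}_{\kappa'}\hookrightarrow\mathbf{MKF}_\kappa$ are not essentially surjective; i.e. there is an object of $\mathbf{CAMA}_\kappa$ not isomorphic to any object of $\mathbf{CAMA}_{\kappa'}$, and an object of $\mathbf{MKF}_\kappa$ not isomorphic to any object of $\mathbf{MKF}_{\kappa'}$.
   Context: A modal algebra is a Boolean algebra with a unary operation $\Diamond$ satisfying $\Diamond 0=0$ and $\Diamond(x\vee y)=\Diamond x\vee\Diamond y$; complete/atomic refer to the Boolean reduct; for a cardinal $\lambda$ it is $\lambda$-additive if $\Diamond\bigvee X=\bigvee_{x\in X}\Diamond x$ for every $X$ with $|X|<\lambda$. A homomorphism of complete modal algebras is a Boolean homomorphism preserving all joins and meets and commuting with $\Diamond$. $\mathbf{CAMA}_\lambda$ is the category of $\lambda$-additive complete atomic modal algebras with these homomorphisms. A multi-relational Kripke frame is a pair $\langle W,S\rangle$ with $W$ non-empty and $S$ a non-empty set of binary relations on $W$; it is $\lambda$-downward directed if for every $S'\subseteq S$ with $|S'|<\lambda$ there is $R\in S$ with $R\subseteq\bigcap S'$ (with $\bigcap\emptyset=W\times W$). A homomorphism $f:\langle W_1,S_1\rangle\to\langle W_2,S_2\rangle$ is a map $f:W_1\to W_2$ such that: (i) for every $x\in W_1$ and $R_2\in S_2$ there is $R_1\in S_1$ such that for all $y\in W_1$, $xR_1y$ implies $f(x)R_2f(y)$;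 (ii) for every $x\in W_1$ and $R_1\in S_1$ there is $R_2\in S_2$ such that for all $u\in W_2$, if $f(x)R_2u$ then there exists $y\in W_1$ with $xR_1y$ and $f(y)=u$; an isomorphism is a bijective homomorphism. $\mathbf{MKF}_\lambda$ is the category of $\lambda$-downward directed multi-relational Kripke frames with these homomorphisms. A functor is essentially surjective if every object of the target is isomorphic to the image of some object. *)

theory Defs
  imports Main
begin

text \<open>A cardinal is a cardinal order relation (library notion Card_order).
 A regular cardinal is an infinite cardinal satisfying regularCard.
 "|X| < lambda" is (card_of X, lambda) in ordLess.\<close>

definition regular_cardinal :: "'k rel \<Rightarrow> bool" where
  "regular_cardinal k \<longleftrightarrow> Card_order k \<and> infinite (Field k) \<and> regularCard k"

definition card_less :: "'a set \<Rightarrow> 'k rel \<Rightarrow> bool" where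
  "card_less X k \<longleftrightarrow> (card_of X, k) \<in> ordLess"

text \<open>The Boolean reduct is given by its carrier and its (lattice) order;
 joins and meets are least upper / greatest lower bounds.\<close>

record 'a modal_alg =
  mcar :: "'a set"
  mle  :: "'a \<Rightarrow> 'a \<Rightarrow> bool"
  mdia :: "'a \<Rightarrow> 'a"

definition is_lub :: "'a modal_alg \<Rightarrow> 'a set \<Rightarrow> 'a \<Rightarrow> bool" where
  "is_lub M X s \<longleftrightarrow> s \<in> mcar M \<and> (\<forall>x\<in>X. mle M x s)
     \<and> (\<forall>u\<in>mcar M. (\<forall>x\<in>X. mle M x u) \<longrightarrow> mle M s u)"

definition is_glb :: "'a modal_alg \<Rightarrow> 'a set \<Rightarrow> 'a \<Rightarrow> bool" where
  "is_glb M X s \<longleftrightarrow> s \<in> mcar M \<and> (\<forall>x\<in>X. mle M s x)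
     \<and> (\<forall>u\<in>mcar M. (\<forall>x\<in>X. mle M u x) \<longrightarrow> mle M u s)"

definition msup :: "'a modal_alg \<Rightarrow> 'a set \<Rightarrow> 'a" where
  "msup M X = (THE s. is_lub M X s)"

definition minf :: "'a modal_alg \<Rightarrow> 'a set \<Rightarrow> 'a" where
  "minf M X = (THE s. is_glb M X s)"

definition mjoin :: "'a modal_alg \<Rightarrow> 'a \<Rightarrow> 'a \<Rightarrow> 'a" where
  "mjoin M x y = msup M {x, y}"

definition mmeet :: "'a modal_alg \<Rightarrow> 'a \<Rightarrow> 'a \<Rightarrow> 'a" where
  "mmeet M x y = minf M {x, y}"

definition mbot :: "'a modal_alg \<Rightarrow> 'a" where
  "mbot M = msup M {}"

definition mtop :: "'a modal_alg \<Rightarrow> 'a" where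
  "mtop M = minf M {}"

definition is_atom :: "'a modal_alg \<Rightarrow> 'a \<Rightarrow> bool" where
  "is_atom M a \<longleftrightarrow> a \<in> mcar M \<and> a \<noteq> mbot M
     \<and> (\<forall>b\<in>mcar M. mle M b a \<longrightarrow> b = mbot M \<or> b = a)"

text \<open>Complete Boolean algebra (as a complete, distributive, complemented
 lattice), atomic, with a normal additive operator.\<close>

definition cama :: "'a modal_alg \<Rightarrow> bool" where
  "cama M \<longleftrightarrow>
     (\<forall>x\<in>mcar M. mle M x x)
   \<and> (\<forall>x\<in>mcar M. \<forall>y\<in>mcar M. mle M x y \<and> mle M y x \<longrightarrow> x = y)
   \<and> (\<forall>x\<in>mcar M. \<forall>y\<in>mcar M. \<forall>z\<in>mcar M. mle M x y \<and> mle M y z \<longrightarrow> mle M x z)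
   \<and> (\<forall>X. X \<subseteq> mcar M \<longrightarrow> (\<exists>s. is_lub M X s))
   \<and> (\<forall>X. X \<subseteq> mcar M \<longrightarrow> (\<exists>s. is_glb M X s))
   \<and> (\<forall>x\<in>mcar M. \<forall>y\<in>mcar M. \<forall>z\<in>mcar M.
         mmeet M x (mjoin M y z) = mjoin M (mmeet M x y) (mmeet M x z))
   \<and> (\<forall>x\<in>mcar M. \<exists>y\<in>mcar M. mjoin M x y = mtop M \<and> mmeet M x y = mbot M)
   \<and> (\<forall>x\<in>mcar M. x \<noteq> mbot M \<longrightarrow> (\<exists>a. is_atom M a \<and> mle M a x))
   \<and> (\<forall>x\<in>mcar M. mdia M x \<in> mcar M)
   \<and> mdia M (mbot M) = mbot M
   \<and> (\<forall>x\<in>mcar M. \<forall>y\<in>mcar M. mdia M (mjoin M x y) = mjoin M (mdia M x) (mdia M y))"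

definition additive :: "'k rel \<Rightarrow> 'a modal_alg \<Rightarrow> bool" where
  "additive l M \<longleftrightarrow> (\<forall>X. X \<subseteq> mcar M \<and> card_less X l \<longrightarrow>
       mdia M (msup M X) = msup M (mdia M ` X))"

definition CAMA :: "'k rel \<Rightarrow> 'a modal_alg \<Rightarrow> bool" where
  "CAMA l M \<longleftrightarrow> cama M \<and> additive l M"

definition ma_hom :: "'a modal_alg \<Rightarrow> 'b modal_alg \<Rightarrow> ('a \<Rightarrow> 'b) \<Rightarrow> bool" where
  "ma_hom M N f \<longleftrightarrow> (\<forall>x\<in>mcar M. f x \<in> mcar N)
    \<and> (\<forall>X. X \<subseteq> mcar M \<longrightarrow> f (msup M X) = msup N (f ` X))
    \<and> (\<forall>X. X \<subseteq> mcar M \<longrightarrow> f (minf M X) = minf N (f ` X))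
    \<and> (\<forall>x\<in>mcar M. f (mdia M x) = mdia N (f x))"

definition ma_iso :: "'a modal_alg \<Rightarrow> 'b modal_alg \<Rightarrow> bool" where
  "ma_iso M N \<longleftrightarrow> (\<exists>f g. ma_hom M N f \<and> ma_hom N M g
     \<and> (\<forall>x\<in>mcar M. g (f x) = x) \<and> (\<forall>y\<in>mcar N. f (g y) = y))"

definition mkf :: "'a set \<Rightarrow> ('a \<times> 'a) set set \<Rightarrow> bool" where
  "mkf W S \<longleftrightarrow> W \<noteq> {} \<and> S \<noteq> {} \<and> (\<forall>R\<in>S. R \<subseteq> W \<times> W)"

text \<open>Downward directedness; for S' empty the condition R subset of W x W
 holds since all relations are on W.\<close>
definition down_directed :: "'k rel \<Rightarrow> 'a set \<Rightarrow> ('a \<times> 'a) set set \<Rightarrow> bool" where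
  "down_directed l W S \<longleftrightarrow> (\<forall>S'. S' \<subseteq> S \<and> card_less S' l \<longrightarrow>
      (\<exists>R\<in>S. R \<subseteq> W \<times> W \<and> (\<forall>R'\<in>S'. R \<subseteq> R')))"

definition MKF :: "'k rel \<Rightarrow> 'a set \<Rightarrow> ('a \<times> 'a) set set \<Rightarrow> bool" where
  "MKF l W S \<longleftrightarrow> mkf W S \<and> down_directed l W S"

definition kf_hom :: "'a set \<Rightarrow> ('a \<times> 'a) set set \<Rightarrow> 'b set \<Rightarrow> ('b \<times> 'b) set set
     \<Rightarrow> ('a \<Rightarrow> 'b) \<Rightarrow> bool" where
  "kf_hom W1 S1 W2 S2 f \<longleftrightarrow> (\<forall>x\<in>W1. f x \<in> W2)
    \<and> (\<forall>x\<in>W1. \<forall>R2\<in>S2. \<exists>R1\<in>S1. \<forall>y\<in>W1. (x, y) \<in> R1 \<longrightarrow> (f x, f y) \<in> R2)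
    \<and> (\<forall>x\<in>W1. \<forall>R1\<in>S1. \<exists>R2\<in>S2. \<forall>u\<in>W2. (f x, u) \<in> R2 \<longrightarrow>
          (\<exists>y\<in>W1. (x, y) \<in> R1 \<and> f y = u))"

definition kf_iso :: "'a set \<Rightarrow> ('a \<times> 'a) set set \<Rightarrow> 'b set \<Rightarrow> ('b \<times> 'b) set set \<Rightarrow> bool" where
  "kf_iso W1 S1 W2 S2 \<longleftrightarrow> (\<exists>f. kf_hom W1 S1 W2 S2 f \<and> bij_betw f W1 W2)"

end

theory Submission
  imports Defs
begin

text \<open>Let \<open>W\<close> be the field of \<open>\<kappa>\<close>. On the powerset of \<open>W\<close> put \<open>\<Diamond>X = {}\<close> for \<open>|X| < \<kappa>\<close> and
  \<open>\<Diamond>X = W\<close> otherwise; regularity of \<open>\<kappa>\<close> makes \<open>\<Diamond>\<close> \<open>\<kappa>\<close>-additive, but the \<open>\<kappa> < \<kappa>'\<close> singletons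
  of \<open>W\<close> have empty diamonds while their union does not, so \<open>\<Diamond>\<close> is not \<open>\<kappa>'\<close>-additive.
  Additivity transfers back along isomorphisms, so no \<open>\<kappa>'\<close>-additive algebra is isomorphic.

  Dually, take on \<open>W\<close> all relations \<open>W \<times> (W - A)\<close> with \<open>|A| < \<kappa>\<close>. If \<open>f\<close> were an isomorphism
  onto a \<open>\<kappa>'\<close>-directed frame, fix \<open>x\<close>; for each \<open>a\<close> the relation \<open>W \<times> (W - {a})\<close> yields, by
  the back condition and injectivity, a target relation omitting \<open>(f x, f a)\<close>. These \<open>\<kappa> < \<kappa>'\<close>
  relations have a common lower bound \<open>R\<close>, yet the forth condition gives some \<open>W \<times> (W - A)\<close>
  whose image lies in \<open>R\<close>, so \<open>(f x, f y) \<in> R\<close> for any \<open>y \<notin> A\<close>.\<close>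

definition powerset_alg :: "'a set \<Rightarrow> ('a set \<Rightarrow> 'a set) \<Rightarrow> 'a set modal_alg" where
  "powerset_alg W D = \<lparr>mcar = Pow W, mle = (\<subseteq>), mdia = D\<rparr>"

lemma powerset_alg_simps [simp]:
  "mcar (powerset_alg W D) = Pow W" "mle (powerset_alg W D) = (\<subseteq>)" "mdia (powerset_alg W D) = D"
  by (simp_all add: powerset_alg_def)

lemma is_lub_powerset_alg: "X \<subseteq> Pow W \<Longrightarrow> is_lub (powerset_alg W D) X (\<Union>X)"
  by (auto simp: is_lub_def)

lemma is_glb_powerset_alg: "X \<subseteq> Pow W \<Longrightarrow> is_glb (powerset_alg W D) X (W \<inter> \<Inter>X)"
  by (auto simp: is_glb_def)

lemma msup_powerset_alg:
  assumes "X \<subseteq> Pow W"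
  shows "msup (powerset_alg W D) X = \<Union>X"
  unfolding msup_def
proof (rule the_equality)
  show "is_lub (powerset_alg W D) X (\<Union>X)"
    by (rule is_lub_powerset_alg[OF assms])
  fix s assume "is_lub (powerset_alg W D) X s"
  then have "\<Union>X \<subseteq> s" and "\<Union>X \<in> Pow W \<longrightarrow> (\<forall>x\<in>X. x \<subseteq> \<Union>X) \<longrightarrow> s \<subseteq> \<Union>X"
    unfolding is_lub_def by auto
  with assms show "s = \<Union>X" by blast
qed

lemma minf_powerset_alg:
  assumes "X \<subseteq> Pow W"
  shows "minf (powerset_alg W D) X = W \<inter> \<Inter>X"
  unfolding minf_def
proof (rule the_equality)
  show "is_glb (powerset_alg W D) X (W \<inter> \<Inter>X)"
    by (rule is_glb_powerset_alg[OF assms])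
  fix s assume "is_glb (powerset_alg W D) X s"
  then have "s \<subseteq> W \<inter> \<Inter>X" and "W \<inter> \<Inter>X \<in> Pow W \<longrightarrow> (\<forall>x\<in>X. W \<inter> \<Inter>X \<subseteq> x) \<longrightarrow> W \<inter> \<Inter>X \<subseteq> s"
    unfolding is_glb_def by auto
  then show "s = W \<inter> \<Inter>X" by blast
qed

lemma powerset_alg_ops:
  assumes "x \<subseteq> W" "y \<subseteq> W"
  shows "mjoin (powerset_alg W D) x y = x \<union> y" "mmeet (powerset_alg W D) x y = x \<inter> y"
  using assms by (auto simp: mjoin_def mmeet_def msup_powerset_alg minf_powerset_alg)

lemma powerset_alg_bot_top: "mbot (powerset_alg W D) = {}" "mtop (powerset_alg W D) = W"
  by (simp_all add: mbot_def mtop_def msup_powerset_alg minf_powerset_alg)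

lemma cama_powerset_alg:
  assumes "\<And>x. x \<subseteq> W \<Longrightarrow> D x \<subseteq> W" "D {} = {}"
    and "\<And>x y. x \<subseteq> W \<Longrightarrow> y \<subseteq> W \<Longrightarrow> D (x \<union> y) = D x \<union> D y"
  shows "cama (powerset_alg W D)"
proof -
  let ?P = "powerset_alg W D"
  have distrib: "mmeet ?P x (mjoin ?P y z) = mjoin ?P (mmeet ?P x y) (mmeet ?P x z)"
    if "x \<subseteq> W" "y \<subseteq> W" "z \<subseteq> W" for x y z
  proof -
    have "y \<union> z \<subseteq> W" "x \<inter> y \<subseteq> W" "x \<inter> z \<subseteq> W"
      using that by auto
    with that show ?thesis
      by (simp add: powerset_alg_ops Int_Un_distrib)
  qed
  have complement: "\<exists>y\<in>Pow W. mjoin ?P x y = W \<and> mmeet ?P x y = {}" if "x \<subseteq> W" for x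
    using that by (intro bexI[of _ "W - x"]) (auto simp: powerset_alg_ops)
  have atomic: "\<exists>a. is_atom ?P a \<and> a \<subseteq> x" if "x \<subseteq> W" "x \<noteq> {}" for x
  proof -
    obtain a where "a \<in> x" using \<open>x \<noteq> {}\<close> by blast
    with that have "is_atom ?P {a} \<and> {a} \<subseteq> x"
      by (auto simp: is_atom_def powerset_alg_bot_top)
    then show ?thesis by blast
  qed
  have dia_join: "D (mjoin ?P x y) = mjoin ?P (D x) (D y)" if "x \<subseteq> W" "y \<subseteq> W" for x y
  proof -
    have "D x \<subseteq> W" "D y \<subseteq> W"
      using that assms(1) by auto
    then have "mjoin ?P (D x) (D y) = D x \<union> D y"
      by (rule powerset_alg_ops)
    moreover have "mjoin ?P x y = x \<union> y"
      using that by (rule powerset_alg_ops)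
    ultimately show ?thesis
      using assms(3)[OF that] by simp
  qed
  show ?thesis
    unfolding cama_def powerset_alg_bot_top powerset_alg_simps
    apply (intro conjI)
    subgoal by blast
    subgoal by blast
    subgoal by blast
    subgoal using is_lub_powerset_alg by blast
    subgoal using is_glb_powerset_alg by blast
    subgoal using distrib by blast
    subgoal using complement by blast
    subgoal using atomic by blast
    subgoal using assms(1) by blast
    subgoal using assms(2) by blast
    subgoal using dia_join by blast
    done
qed

lemma cama_antisym: "cama M \<Longrightarrow> \<forall>x\<in>mcar M. \<forall>y\<in>mcar M. mle M x y \<and> mle M y x \<longrightarrow> x = y"
  unfolding cama_def by (elim conjE) assumption

lemma cama_ex_lub: "cama M \<Longrightarrow> \<forall>X. X \<subseteq> mcar M \<longrightarrow> (\<exists>s. is_lub M X s)"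
  unfolding cama_def by (elim conjE) assumption

lemma cama_mdia_closed: "cama M \<Longrightarrow> \<forall>x\<in>mcar M. mdia M x \<in> mcar M"
  unfolding cama_def by (elim conjE) assumption

lemma cama_is_lub_msup:
  assumes "cama M" "X \<subseteq> mcar M"
  shows "is_lub M X (msup M X)"
proof -
  obtain s where s: "is_lub M X s"
    using cama_ex_lub[OF assms(1)] assms(2) by blast
  have "t = s" if t: "is_lub M X t" for t
  proof (rule cama_antisym[OF assms(1), rule_format])
    show "t \<in> mcar M" "s \<in> mcar M" "mle M t s \<and> mle M s t"
      using s t unfolding is_lub_def by blast+
  qed
  then have "msup M X = s"
    unfolding msup_def using s by blast
  with s show ?thesis by simp
qed

lemma card_less_subset: "X \<subseteq> Y \<Longrightarrow> card_less Y k \<Longrightarrow> card_less X k"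
  unfolding card_less_def using card_of_mono1 ordLeq_ordLess_trans by blast

lemma card_less_image: "card_less X k \<Longrightarrow> card_less (f ` X) k"
  unfolding card_less_def using card_of_image ordLeq_ordLess_trans by blast

lemma card_less_image_Field:
  assumes "Card_order k" "(k, k') \<in> ordLess"
  shows "card_less (f ` Field k) k'"
  unfolding card_less_def
  using card_of_image ordLeq_ordIso_trans card_of_Field_ordIso[OF assms(1)] assms(2)
    ordLeq_ordLess_trans by blast

lemma additive_iso_transfer:
  assumes M: "cama M" and iso: "ma_iso M N" and additive_N: "additive l N"
  shows "additive l M"
  unfolding additive_def
proof (intro allI impI, elim conjE)
  fix X assume X: "X \<subseteq> mcar M" and small: "card_less X l"
  obtain f g where f: "ma_hom M N f" and gf: "\<forall>x\<in>mcar M. g (f x) = x"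
    using iso unfolding ma_iso_def by blast
  have dia_X: "mdia M ` X \<subseteq> mcar M"
    using cama_mdia_closed[OF M] X by blast
  have sup_X: "msup M X \<in> mcar M" and sup_dia_X: "msup M (mdia M ` X) \<in> mcar M"
    using cama_is_lub_msup[OF M X] cama_is_lub_msup[OF M dia_X] unfolding is_lub_def by blast+
  have f_X: "f ` X \<subseteq> mcar N"
    using f X unfolding ma_hom_def by blast
  have f_dia: "f (mdia M x) = mdia N (f x)" if "x \<in> mcar M" for x
    using f that unfolding ma_hom_def by blast
  have f_sup: "f (msup M Y) = msup N (f ` Y)" if "Y \<subseteq> mcar M" for Y
    using f that unfolding ma_hom_def by blast
  have "f (mdia M (msup M X)) = mdia N (msup N (f ` X))"
    by (simp add: f_dia[OF sup_X] f_sup[OF X])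
  also have "\<dots> = msup N (mdia N ` f ` X)"
    using additive_N f_X card_less_image[OF small] unfolding additive_def by blast
  also have "mdia N ` f ` X = f ` mdia M ` X"
    using X by (force simp: f_dia)
  also have "msup N (f ` mdia M ` X) = f (msup M (mdia M ` X))"
    by (simp add: f_sup[OF dia_X])
  finally have "g (f (mdia M (msup M X))) = g (f (msup M (mdia M ` X)))"
    by simp
  moreover have "mdia M (msup M X) \<in> mcar M"
    using cama_mdia_closed[OF M] sup_X by blast
  ultimately show "mdia M (msup M X) = msup M (mdia M ` X)"
    using gf sup_dia_X by simp
qed

locale regular_card =
  fixes k :: "'k rel"
  assumes regular: "regular_cardinal k"
begin

lemma Card_order: "Card_order k" and infinite_Field: "infinite (Field k)"
  using regular unfolding regular_cardinal_def by auto

lemma Field_nonempty: "Field k \<noteq> {}"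
  using infinite_Field by auto

lemma card_less_finite: "finite (X :: 'a set) \<Longrightarrow> card_less X k"
  unfolding card_less_def
  using finite_ordLess_infinite[OF card_of_Well_order card_order_on_well_order_on[OF Card_order]]
    infinite_Field
  by (simp add: Field_card_of)

lemma card_less_Un: "card_less X k \<Longrightarrow> card_less Y k \<Longrightarrow> card_less (X \<union> Y) k"
  unfolding card_less_def using card_of_Un_ordLess_infinite_Field infinite_Field Card_order by blast

lemma card_less_UN:
  "card_less I k \<Longrightarrow> (\<And>i. i \<in> I \<Longrightarrow> card_less (A i) k) \<Longrightarrow> card_less (\<Union>(A ` I)) k"
  using card_of_UNION_ordLess_infinite_Field[OF _ Card_order] regular regularCard_stable
  unfolding card_less_def regular_cardinal_def by blast

lemma not_card_less_Field: "\<not> card_less (Field k) k"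
  unfolding card_less_def using card_of_Field_ordIso[OF Card_order] not_ordLess_ordIso by blast

definition large_dia :: "'k set \<Rightarrow> 'k set" where
  "large_dia X = (if card_less X k then {} else Field k)"

definition large_alg :: "'k set modal_alg" where
  "large_alg = powerset_alg (Field k) large_dia"

lemma cama_large_alg: "cama large_alg"
  unfolding large_alg_def
proof (rule cama_powerset_alg)
  show "large_dia {} = {}"
    using card_less_finite[of "{} :: 'k set"] by (simp add: large_dia_def)
  show "large_dia (x \<union> y) = large_dia x \<union> large_dia y" for x y
    using card_less_Un[of x y] card_less_subset[of x "x \<union> y" k] card_less_subset[of y "x \<union> y" k]
    by (auto simp: large_dia_def)
qed (simp add: large_dia_def)

lemma additive_large_alg: "additive k large_alg"
  unfolding additive_def
proof (intro allI impI, elim conjE)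
  fix X assume X: "X \<subseteq> mcar large_alg" and small: "card_less X k"
  then have X_Pow: "X \<subseteq> Pow (Field k)"
    by (simp add: large_alg_def)
  have "large_dia ` X \<subseteq> Pow (Field k)"
    by (auto simp: large_dia_def)
  then have sups: "msup large_alg X = \<Union>X" "msup large_alg (mdia large_alg ` X) = \<Union>(large_dia ` X)"
    using X_Pow by (simp_all add: large_alg_def msup_powerset_alg)
  show "mdia large_alg (msup large_alg X) = msup large_alg (mdia large_alg ` X)"
  proof (cases "\<forall>x\<in>X. card_less x k")
    case True
    then have "card_less (\<Union>X) k"
      using card_less_UN[of X id] small by simp
    with True show ?thesis
      unfolding sups by (simp add: large_alg_def large_dia_def)
  next
    case False
    then obtain x where "x \<in> X" "\<not> card_less x k" by blast
    then have "\<not> card_less (\<Union>X) k" "\<Union>(large_dia ` X) = Field k"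
      using card_less_subset[of x "\<Union>X" k] X_Pow by (auto simp: large_dia_def)
    then show ?thesis
      unfolding sups by (simp add: large_alg_def large_dia_def)
  qed
qed

lemma not_additive_large_alg:
  assumes "(k, k') \<in> ordLess"
  shows "\<not> additive k' large_alg"
proof
  assume additive: "additive k' large_alg"
  let ?atoms = "(\<lambda>a. {a}) ` Field k"
  have "?atoms \<subseteq> mcar large_alg" "card_less ?atoms k'"
    using card_less_image_Field[OF Card_order assms] by (auto simp: large_alg_def)
  with additive have "mdia large_alg (msup large_alg ?atoms) = msup large_alg (mdia large_alg ` ?atoms)"
    unfolding additive_def by blast
  moreover have "msup large_alg ?atoms = Field k"
    unfolding large_alg_def by (subst msup_powerset_alg[of _ "Field k"]) auto
  moreover have "large_dia {a} = {}" for a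
    using card_less_finite[of "{a}"] by (simp add: large_dia_def)
  then have "mdia large_alg ` ?atoms = {{}}"
    using Field_nonempty by (simp add: large_alg_def image_image image_constant_conv)
  ultimately have "large_dia (Field k) = {}"
    by (simp add: large_alg_def msup_powerset_alg)
  then show False
    using not_card_less_Field Field_nonempty by (simp add: large_dia_def)
qed

definition cosmall_rels :: "('k \<times> 'k) set set" where
  "cosmall_rels = {Field k \<times> (Field k - A) | A. A \<subseteq> Field k \<and> card_less A k}"

lemma cosmall_relsI: "A \<subseteq> Field k \<Longrightarrow> card_less A k \<Longrightarrow> Field k \<times> (Field k - A) \<in> cosmall_rels"
  unfolding cosmall_rels_def by blast

lemma cosmall_relsE:
  assumes "R \<in> cosmall_rels"
  obtains A where "R = Field k \<times> (Field k - A)" "A \<subseteq> Field k" "card_less A k"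
  using assms unfolding cosmall_rels_def by blast

lemma MKF_cosmall_rels: "MKF k (Field k) cosmall_rels"
  unfolding MKF_def
proof
  have "Field k \<times> (Field k - {}) \<in> cosmall_rels"
    by (rule cosmall_relsI) (auto intro: card_less_finite)
  then show "mkf (Field k) cosmall_rels"
    unfolding mkf_def using Field_nonempty by (auto elim: cosmall_relsE)
  show "down_directed k (Field k) cosmall_rels"
    unfolding down_directed_def
  proof (intro allI impI, elim conjE)
    fix S' assume S': "S' \<subseteq> cosmall_rels" and small: "card_less S' k"
    define B where "B = (\<Union>R\<in>S'. Field k - Range R)"
    have range: "Field k - Range (Field k \<times> (Field k - A)) = A" if "A \<subseteq> Field k" for A
      using that Field_nonempty by auto
    have "card_less B k"
      unfolding B_def using small S' by (intro card_less_UN) (auto elim!: cosmall_relsE simp: range)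
    then have "Field k \<times> (Field k - B) \<in> cosmall_rels"
      by (intro cosmall_relsI) (auto simp: B_def)
    moreover have "Field k \<times> (Field k - B) \<subseteq> R" if "R \<in> S'" for R
    proof -
      obtain A where A: "R = Field k \<times> (Field k - A)" "A \<subseteq> Field k"
        using \<open>R \<in> S'\<close> S' by (blast elim: cosmall_relsE)
      with \<open>R \<in> S'\<close> have "A \<subseteq> B"
        unfolding B_def using range[OF A(2)] by auto
      with A show ?thesis by auto
    qed
    ultimately show "\<exists>R\<in>cosmall_rels. R \<subseteq> Field k \<times> Field k \<and> (\<forall>R'\<in>S'. R \<subseteq> R')"
      by (intro bexI[of _ "Field k \<times> (Field k - B)"] conjI ballI) auto
  qed
qed

lemma kf_hom_cosmall_rels_separates:
  assumes hom: "kf_hom (Field k) cosmall_rels W' S' f" and inj: "inj_on f (Field k)"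
    and x: "x \<in> Field k" and a: "a \<in> Field k"
  shows "\<exists>R\<in>S'. (f x, f a) \<notin> R"
proof -
  have "Field k \<times> (Field k - {a}) \<in> cosmall_rels"
    using a by (intro cosmall_relsI) (auto intro: card_less_finite)
  with hom x obtain R where R: "R \<in> S'"
    and preimage: "\<forall>u\<in>W'. (f x, u) \<in> R \<longrightarrow> (\<exists>y\<in>Field k. y \<noteq> a \<and> f y = u)"
    unfolding kf_hom_def by fastforce
  have "f a \<in> W'"
    using hom a unfolding kf_hom_def by blast
  with preimage inj a have "(f x, f a) \<notin> R"
    unfolding inj_on_def by blast
  with R show ?thesis by blast
qed

lemma not_kf_iso_cosmall_rels:
  assumes "(k, k') \<in> ordLess" and "MKF k' (W' :: 'c set) S'"
  shows "\<not> kf_iso (Field k) cosmall_rels W' S'"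
proof
  assume "kf_iso (Field k) cosmall_rels W' S'"
  then obtain f where hom: "kf_hom (Field k) cosmall_rels W' S' f" and bij: "bij_betw f (Field k) W'"
    unfolding kf_iso_def by blast
  obtain x where x: "x \<in> Field k"
    using Field_nonempty by blast
  obtain sep where sep: "\<forall>a\<in>Field k. sep a \<in> S' \<and> (f x, f a) \<notin> sep a"
    using kf_hom_cosmall_rels_separates[OF hom bij_betw_imp_inj_on[OF bij] x] by metis
  have "sep ` Field k \<subseteq> S'" "card_less (sep ` Field k) k'"
    using sep card_less_image_Field[OF Card_order assms(1)] by auto
  then obtain R where R: "R \<in> S'" "\<forall>a\<in>Field k. R \<subseteq> sep a"
    using assms(2) unfolding MKF_def down_directed_def by (metis image_eqI)
  obtain R1 where R1: "R1 \<in> cosmall_rels" and forth: "\<forall>y\<in>Field k. (x, y) \<in> R1 \<longrightarrow> (f x, f y) \<in> R"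
    using hom x R(1) unfolding kf_hom_def by blast
  obtain A where A: "R1 = Field k \<times> (Field k - A)" "A \<subseteq> Field k" "card_less A k"
    using R1 by (rule cosmall_relsE)
  have "\<not> Field k \<subseteq> A"
    using A(3) not_card_less_Field card_less_subset[of "Field k" A k] by blast
  then obtain y where "y \<in> Field k" "y \<notin> A"
    by blast
  then show False
    using forth A(1) x R(2) sep by blast
qed

end

theorem theorem10p2:
  fixes k :: "'k rel" and k' :: "'l rel"
  assumes "regular_cardinal k" and "regular_cardinal k'" and "(k, k') \<in> ordLess"
  shows "(\<exists>M :: 'k set modal_alg. CAMA k M \<and>
            (\<forall>N :: 'b modal_alg. CAMA k' N \<longrightarrow> \<not> ma_iso M N))
       \<and> (\<exists>(W :: 'k set) S. MKF k W S \<and>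
            (\<forall>(W' :: 'c set) S'. MKF k' W' S' \<longrightarrow> \<not> kf_iso W S W' S'))"
proof
  interpret regular_card k by unfold_locales (rule assms(1))
  show "\<exists>M :: 'k set modal_alg. CAMA k M \<and> (\<forall>N :: 'b modal_alg. CAMA k' N \<longrightarrow> \<not> ma_iso M N)"
    using cama_large_alg additive_large_alg not_additive_large_alg[OF assms(3)]
      additive_iso_transfer[OF cama_large_alg]
    unfolding CAMA_def by blast
  show "\<exists>(W :: 'k set) S. MKF k W S \<and> (\<forall>(W' :: 'c set) S'. MKF k' W' S' \<longrightarrow> \<not> kf_iso W S W' S')"
    using MKF_cosmall_rels not_kf_iso_cosmall_rels[OF assms(3)] by blast
qed

end
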